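(* Let $p$ be a prime, let $\chi$ be a Dirichlet character, and let $y$ be a positive integer. If $\prod_{n=1}^y|1+\chi(n)|>2^y/p^2$, then the number of integers $n\in\{1,\dots,y\}$ such that $|\chi(n)-1|>1/\log p$ is less than $16(\log p)^3$. *)

theory Defs
  imports Complex_Main "HOL-Computational_Algebra.Primes"
begin

definition dirichlet_character :: "nat \<Rightarrow> (nat \<Rightarrow> complex) \<Rightarrow> bool" where
  "dirichlet_character q \<chi> \<longleftrightarrow>
     q > 0 \<and> \<chi> 1 = 1 \<and>
     (\<forall>m n. \<chi> (m * n) = \<chi> m * \<chi> n) \<and>
     (\<forall>n. \<chi> (n + q) = \<chi> n) \<and>
     (\<forall>n. \<chi> n = 0 \<longleftrightarrow> \<not> coprime n q)"

end

theory Submission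
  imports Defs "HOL-Number_Theory.Residues"
begin

text \<open>Every value of \<open>\<chi>\<close> lies in the closed unit disc, and on that disc the parallelogram law
gives \<open>|1 + z|\<^sup>2 \<le> 4 - |z - 1|\<^sup>2 \<le> 4 exp (-|z - 1|\<^sup>2 / 4)\<close>. Multiplying over \<open>n \<le> y\<close>, the
hypothesis \<open>2\<^sup>y / p\<^sup>2 < \<Prod>|1 + \<chi> n|\<close> forces \<open>\<Sum>|\<chi> n - 1|\<^sup>2 < 16 log p\<close>, and each \<open>n\<close> counted
on the left contributes more than \<open>1 / (log p)\<^sup>2\<close> to this sum.\<close>

lemma periodic_mod:
  fixes f :: "nat \<Rightarrow> 'a"
  assumes "\<And>n. f (n + q) = f n"
  shows "f (m mod q) = f m"
proof -
  have "f (r + k * q) = f r" for r k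
  proof (induction k)
    case (Suc k)
    have "f (r + Suc k * q) = f (r + k * q + q)"
      by (simp add: algebra_simps)
    then show ?case
      by (simp add: assms Suc.IH)
  qed simp
  from this [of "m mod q" "m div q"] show ?thesis
    by simp
qed

lemma dirichlet_character_power:
  assumes "dirichlet_character q \<chi>"
  shows "\<chi> (n ^ k) = \<chi> n ^ k"
  using assms by (induction k) (simp_all add: dirichlet_character_def)

lemma norm_dirichlet_character_coprime:
  assumes \<chi>: "dirichlet_character q \<chi>" and "coprime n q"
  shows "cmod (\<chi> n) = 1"
proof -
  have "q > 0" and "\<chi> 1 = 1" and periodic: "\<And>n. \<chi> (n + q) = \<chi> n"
    using \<chi> by (simp_all add: dirichlet_character_def)
  have "n ^ totient q mod q = 1 mod q"
    using euler_theorem [OF \<open>coprime n q\<close>] by (simp add: cong_def)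
  then have "\<chi> n ^ totient q = 1"
    using periodic_mod [of \<chi>, OF periodic] \<open>\<chi> 1 = 1\<close>
    by (metis dirichlet_character_power [OF \<chi>])
  then have "cmod (\<chi> n) ^ totient q = 1 ^ totient q"
    by (metis norm_one norm_power power_one)
  then show ?thesis
    using \<open>q > 0\<close> power_eq_iff_eq_base [of "totient q" "cmod (\<chi> n)" 1] by simp
qed

lemma norm_dirichlet_character_le_1:
  assumes "dirichlet_character q \<chi>"
  shows "cmod (\<chi> n) \<le> 1"
proof (cases "coprime n q")
  case False
  then have "\<chi> n = 0"
    using assms by (simp add: dirichlet_character_def)
  then show ?thesis
    by simp
qed (simp add: norm_dirichlet_character_coprime [OF assms])

lemma norm_one_plus_le_exp:
  fixes z :: complex
  assumes "cmod z \<le> 1"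
  shows "cmod (1 + z) \<le> 2 * exp (- (cmod (z - 1))\<^sup>2 / 8)"
proof -
  have parallelogram: "(cmod (1 + z))\<^sup>2 + (cmod (z - 1))\<^sup>2 = 2 + 2 * (cmod z)\<^sup>2"
    unfolding cmod_power2 by (simp add: power2_eq_square algebra_simps)
  have "(cmod z)\<^sup>2 \<le> 1"
    using assms by (simp add: power_le_one)
  then have "(cmod (1 + z))\<^sup>2 \<le> 4 - (cmod (z - 1))\<^sup>2"
    using parallelogram by linarith
  also have "\<dots> \<le> 4 * exp (- (cmod (z - 1))\<^sup>2 / 4)"
    using exp_ge_add_one_self [of "- (cmod (z - 1))\<^sup>2 / 4"] by linarith
  also have "\<dots> = (2 * exp (- (cmod (z - 1))\<^sup>2 / 8))\<^sup>2"
    by (simp add: power2_eq_square flip: exp_add)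
  finally show ?thesis
    by (rule power2_le_imp_le) simp
qed

lemma prod_norm_one_plus_le_exp:
  fixes z :: "'a \<Rightarrow> complex"
  assumes "finite A" and "\<And>n. n \<in> A \<Longrightarrow> cmod (z n) \<le> 1"
  shows "(\<Prod>n\<in>A. cmod (1 + z n)) \<le> 2 ^ card A * exp (- (\<Sum>n\<in>A. (cmod (z n - 1))\<^sup>2) / 8)"
proof -
  have "(\<Prod>n\<in>A. cmod (1 + z n)) \<le> (\<Prod>n\<in>A. 2 * exp (- (cmod (z n - 1))\<^sup>2 / 8))"
    by (rule prod_mono) (use assms(2) norm_one_plus_le_exp in auto)
  also have "\<dots> = 2 ^ card A * exp (- (\<Sum>n\<in>A. (cmod (z n - 1))\<^sup>2) / 8)"
    using assms(1) by (simp add: prod.distrib exp_sum [symmetric] sum_negf sum_divide_distrib)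
  finally show ?thesis .
qed

lemma card_gt_mult_square_le_sum_squares:
  fixes g :: "'a \<Rightarrow> real"
  assumes "finite A" and "t \<ge> 0"
  shows "real (card {n \<in> A. t < g n}) * t\<^sup>2 \<le> (\<Sum>n\<in>A. (g n)\<^sup>2)"
proof -
  let ?B = "{n \<in> A. t < g n}"
  have "real (card ?B) * t\<^sup>2 = (\<Sum>n\<in>?B. t\<^sup>2)"
    by simp
  also have "\<dots> \<le> (\<Sum>n\<in>?B. (g n)\<^sup>2)"
    using assms(2) by (intro sum_mono power_mono) auto
  also have "\<dots> \<le> (\<Sum>n\<in>A. (g n)\<^sup>2)"
    using assms(1) by (intro sum_mono2) auto
  finally show ?thesis .
qed

theorem lemma4p3:
  fixes p q y :: nat and \<chi> :: "nat \<Rightarrow> complex"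
  assumes "prime p"
    and "dirichlet_character q \<chi>"
    and "y > 0"
    and "(\<Prod>n=1..y. cmod (1 + \<chi> n)) > 2 ^ y / (real p) ^ 2"
  shows "real (card {n \<in> {1..y}. cmod (\<chi> n - 1) > 1 / ln (real p)}) < 16 * (ln (real p)) ^ 3"
proof -
  define L where "L = ln (real p)"
  define S where "S = (\<Sum>n=1..y. (cmod (\<chi> n - 1))\<^sup>2)"
  have "real p > 1"
    using prime_gt_1_nat [OF \<open>prime p\<close>] by simp
  then have "L > 0"
    by (simp add: L_def)
  have "exp (2 * L) = (real p)\<^sup>2"
    using exp_of_nat_mult [of 2 L] \<open>real p > 1\<close> by (simp add: L_def)
  then have "exp (- 2 * L) * 2 ^ y = 2 ^ y / (real p)\<^sup>2"
    by (simp add: exp_minus field_simps)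
  also have "\<dots> < 2 ^ y * exp (- S / 8)"
    using assms(4) prod_norm_one_plus_le_exp [of "{1..y}" \<chi>]
      norm_dirichlet_character_le_1 [OF assms(2)] by (simp add: S_def)
  finally have "S < 16 * L"
    by simp
  define N where "N = real (card {n \<in> {1..y}. cmod (\<chi> n - 1) > 1 / L})"
  have "N * (1 / L)\<^sup>2 \<le> S"
    unfolding N_def S_def using \<open>L > 0\<close> by (intro card_gt_mult_square_le_sum_squares) simp_all
  then have "N \<le> S * L\<^sup>2"
    using \<open>L > 0\<close> by (simp add: field_simps)
  also have "\<dots> < 16 * L * L\<^sup>2"
    using \<open>S < 16 * L\<close> \<open>L > 0\<close> by simp
  finally show ?thesis
    by (simp add: N_def L_def power2_eq_square power3_eq_cube mult.assoc)
qed

end
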